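(* Let $n \geqslant 14$ be an integer and let $X = \mathrm{A}_n$ or $X = \mathrm{S}_n$. Let $p_{\mathrm{intrans}}(X)$ denote the probability that two elements of $X$, chosen independently and uniformly at random, generate a subgroup contained in some intransitive maximal subgroup of $X$. Then $$p_{\mathrm{intrans}}(X) < \frac{1}{n} + \frac{2.7}{n^2}.$$
   Context: $\mathrm{S}_n$ and $\mathrm{A}_n$ denote the symmetric and alternating groups of degree $n$, acting naturally on $\{1,\dots,n\}$; "intransitive" refers to this natural action. *)

theory Defs
  imports "HOL-Algebra.Sym_Groups" "HOL-Algebra.Generated_Groups" Complex_Main
begin

definition maximal_subgroup :: "('a, 'b) monoid_scheme \<Rightarrow> 'a set \<Rightarrow> bool" where
  "maximal_subgroup G M \<longleftrightarrow> subgroup M G \<and> M \<noteq> carrier G \<and>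
     (\<forall>H. subgroup H G \<and> M \<subseteq> H \<longrightarrow> H = M \<or> H = carrier G)"

definition intransitive :: "nat \<Rightarrow> (nat \<Rightarrow> nat) set \<Rightarrow> bool" where
  "intransitive n H \<longleftrightarrow> \<not> (\<forall>i\<in>{1..n}. \<forall>j\<in>{1..n}. \<exists>h\<in>H. h i = j)"

definition p_intrans :: "nat \<Rightarrow> (nat \<Rightarrow> nat) monoid \<Rightarrow> real" where
  "p_intrans n X =
     real (card {(x, y). x \<in> carrier X \<and> y \<in> carrier X \<and>
        (\<exists>M. maximal_subgroup X M \<and> intransitive n M \<and> generate X {x, y} \<subseteq> M)})
     / (real (card (carrier X)))^2"

end

theory Submission
  imports Defs "HOL-Algebra.Group_Action"
begin

text \<open>
  Let \<open>M\<close> be an intransitive maximal subgroup of \<open>X \<in> {A\<^sub>n, S\<^sub>n}\<close>. An \<open>M\<close>-orbit and its complement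
  are both \<open>M\<close>-invariant, and they cannot have equal size, since then the stabiliser of the
  partition into the two halves would lie strictly between \<open>M\<close> and \<open>X\<close>. Hence \<open>M\<close> leaves
  invariant a nonempty set of size \<open>< n/2\<close>. If \<open>\<langle>x, y\<rangle> \<le> M\<close>, the \<open>\<langle>x, y\<rangle>\<close>-orbit \<open>A\<close> of a point
  of that set has \<open>1 \<le> |A| < n/2\<close>; \<open>x, y\<close> stabilise \<open>A\<close>, and when \<open>|A| = 2\<close> they do not both fix
  \<open>A\<close> pointwise. By orbit-stabiliser, the stabiliser of a \<open>k\<close>-set has index \<open>n choose k\<close>, and for
  \<open>k = 2\<close> the pairs not both fixing the set pointwise are \<open>3/4\<close> of all pairs in the stabiliser.
  The union bound gives
  \<open>p \<le> 1/n + (3/4)/(n choose 2) + \<Sum>\<^sub>3\<^sub>\<le>\<^sub>k\<^sub><\<^sub>n\<^sub>/\<^sub>2 1/(n choose k)\<close>, and bounding every term with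
  \<open>k \<ge> 6\<close> by \<open>1/(n choose 6)\<close> leaves a rational function of \<open>n\<close>.
\<close>

lemma card_eq_twice_if_involution:
  assumes "finite Q" "P \<subseteq> Q"
    and "\<And>p. p \<in> P \<Longrightarrow> g p \<in> Q - P" "\<And>p. p \<in> Q - P \<Longrightarrow> g p \<in> P"
    and "\<And>p. g (g p) = p"
  shows "card Q = 2 * card P"
proof -
  have "bij_betw g P (Q - P)"
    by (rule bij_betw_byWitness[where f' = g]) (use assms in auto)
  then have "card (Q - P) = card P"
    by (simp add: bij_betw_same_card)
  moreover have "card Q = card P + card (Q - P)"
    using assms(1,2) by (metis card_Diff_subset card_mono finite_subset le_add_diff_inverse)
  ultimately show ?thesis
    by simp
qed

lemma obtain_two_distinct:
  assumes "2 \<le> card A"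
  obtains a b where "a \<in> A" "b \<in> A" "a \<noteq> b"
proof -
  obtain B where "B \<subseteq> A" "card B = 2"
    using obtain_subset_with_card_n[OF assms] by metis
  then show ?thesis
    using that by (auto simp: card_2_iff)
qed


section \<open>Moving one set of points onto another\<close>

lemma permutes_image_eq_if_subset:
  assumes "p permutes S" "finite S" "T \<subseteq> S" "p ` T \<subseteq> T"
  shows "p ` T = T"
  using assms by (metis endo_inj_surj finite_subset inj_on_subset permutes_inj subset_UNIV)

lemma permutes_image_Diff:
  assumes "p permutes S"
  shows "p ` (S - T) = S - p ` T"
  using assms by (simp add: image_set_diff permutes_inj permutes_image)

lemma exists_permutes_image_eq:
  assumes "finite S" "A \<subseteq> S" "B \<subseteq> S" "card A = card B"
  obtains p where "p permutes S" "p ` A = B"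
proof -
  have fin: "finite A" "finite B" "finite (S - A)" "finite (S - B)"
    using assms finite_subset by auto
  obtain f where f: "bij_betw f A B"
    using finite_same_card_bij fin assms(4) by blast
  obtain g where g: "bij_betw g (S - A) (S - B)"
    using finite_same_card_bij fin assms by (metis card_Diff_subset)
  define p where "p x = (if x \<in> A then f x else if x \<in> S then g x else x)" for x
  have "bij_betw (\<lambda>x. if x \<in> A then f x else g x) (A \<union> (S - A)) (B \<union> (S - B))"
    using f g by (intro bij_betw_disjoint_Un) auto
  then have "bij_betw (\<lambda>x. if x \<in> A then f x else g x) S S"
    using assms(2,3) by (simp add: Un_absorb1)
  then have "bij_betw p S S"
    by (rule bij_betw_cong[THEN iffD1, rotated]) (simp add: p_def)
  then have "p permutes S"
    by (rule bij_imp_permutes) (use assms(2) in \<open>auto simp: p_def\<close>)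
  moreover have "p ` A = B"
    using f by (simp add: p_def bij_betw_def)
  ultimately show ?thesis
    using that by blast
qed

text \<open>The transposition of \<open>c\<close> and \<open>d\<close> preserves \<open>A\<close>, so composing with it fixes the parity.\<close>

lemma exists_evenperm_image_eq:
  assumes "finite S" "A \<subseteq> S" "B \<subseteq> S" "card A = card B"
    and "c \<in> S" "d \<in> S" "c \<noteq> d" "c \<in> A \<longleftrightarrow> d \<in> A"
  obtains p where "p permutes S" "evenperm p" "p ` A = B"
proof -
  obtain q where q: "q permutes S" "q ` A = B"
    using exists_permutes_image_eq assms(1-4) by blast
  have t: "transpose c d permutes S" "transpose c d ` A = A"
    using assms(5,6,8) by (simp_all add: permutes_swap_id)
  have "permutation q"
    using q(1) assms(1) permutation_permutes by blast
  then have "evenperm (q \<circ> transpose c d) \<longleftrightarrow> \<not> evenperm q"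
    using assms(7) by (simp add: evenperm_comp permutation_swap_id evenperm_swap)
  moreover have "q \<circ> transpose c d permutes S"
    using q t by (simp add: permutes_compose)
  moreover have "(q \<circ> transpose c d) ` A = B"
    by (metis image_comp q(2) t(2))
  ultimately show ?thesis
    using that q by metis
qed


section \<open>The numerical bound\<close>

lemma rational_bound_ge_14:
  fixes x :: real
  assumes "14 \<le> x"
  shows "(3/4) / (x*(x-1)/2) + 1 / (x*(x-1)*(x-2)/6) + 1 / (x*(x-1)*(x-2)*(x-3)/24)
      + 1 / (x*(x-1)*(x-2)*(x-3)*(x-4)/120) + ((x-11)/2) / (x*(x-1)*(x-2)*(x-3)*(x-4)*(x-5)/720)
    < 2.7 / x^2"
proof -
  define y1 y2 y3 y4 y5 where "y1 = x - 1" "y2 = x - 2" "y3 = x - 3" "y4 = x - 4" "y5 = x - 5"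
  define P where "P = y1 * y2 * y3 * y4 * y5"
  define Q where "Q = 3/2 * y2 * y3 * y4 * y5 + 6 * y3 * y4 * y5 + 24 * y4 * y5 + 120 * y5 + 360 * (x - 11)"
  have pos: "x > 0" "y1 > 0" "y2 > 0" "y3 > 0" "y4 > 0" "y5 > 0"
    using assms by (auto simp: y1_y2_y3_y4_y5_def)
  then have "P > 0"
    by (simp add: P_def)
  have "(3/4) / (x*y1/2) + 1 / (x*y1*y2/6) + 1 / (x*y1*y2*y3/24) + 1 / (x*y1*y2*y3*y4/120)
      + ((x-11)/2) / (x*y1*y2*y3*y4*y5/720) = Q / (x * P)"
    using pos by (simp add: P_def Q_def field_simps)
  then have lhs: "(3/4) / (x*(x-1)/2) + 1 / (x*(x-1)*(x-2)/6) + 1 / (x*(x-1)*(x-2)*(x-3)/24)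
      + 1 / (x*(x-1)*(x-2)*(x-3)*(x-4)/120) + ((x-11)/2) / (x*(x-1)*(x-2)*(x-3)*(x-4)*(x-5)/720)
    = Q / (x * P)"
    by (simp only: y1_y2_y3_y4_y5_def)
  define t where "t = x - 14"
  have "27/10 * P - x * Q = 23868 + 303258/10*t + 91995/10*t^2 + 1095*t^3 + 585/10*t^4 + 12/10*t^5"
    unfolding P_def Q_def y1_y2_y3_y4_y5_def t_def by algebra
  moreover have "0 < 23868 + 303258/10*t + 91995/10*t^2 + 1095*t^3 + 585/10*t^4 + 12/10*t^5"
    using assms by (simp add: t_def add_pos_nonneg)
  ultimately have "x * Q < 27/10 * P"
    by linarith
  then have "Q / (x * P) < 27/10 / x^2"
    using pos(1) \<open>P > 0\<close> by (simp add: field_simps power2_eq_square)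
  then show ?thesis
    using lhs by simp
qed

lemma of_nat_binomial_2_to_6:
  assumes "6 \<le> n"
  shows "real (n choose 2) = real n*(real n-1)/2"
    "real (n choose 3) = real n*(real n-1)*(real n-2)/6"
    "real (n choose 4) = real n*(real n-1)*(real n-2)*(real n-3)/24"
    "real (n choose 5) = real n*(real n-1)*(real n-2)*(real n-3)*(real n-4)/120"
    "real (n choose 6) = real n*(real n-1)*(real n-2)*(real n-3)*(real n-4)*(real n-5)/720"
  using assms by (simp_all add: binomial_altdef_of_nat prod.atLeast0_lessThan_Suc of_nat_diff
      numeral_eq_Suc field_simps)

lemma weighted_inverse_binomial_sum_lt:
  assumes n: "14 \<le> n"
  shows "(\<Sum>k = 1..(n - 1) div 2. (if k = 2 then 3/4 else 1) / real (n choose k))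
    < 1 / real n + 2.7 / (real n)^2"
proof -
  define K where "K = (n - 1) div 2"
  have K: "6 \<le> K" "2 * K \<le> n" "2 * real (K - 5) \<le> real n - 11"
    using n unfolding K_def by linarith+
  have C6: "real (n choose 6) > 0"
    using n by simp
  have "(\<Sum>k = 6..K. (if k = 2 then 3/4 else 1) / real (n choose k))
      \<le> (\<Sum>k = 6..K. 1 / real (n choose 6))"
  proof (rule sum_mono)
    fix k
    assume "k \<in> {6..K}"
    then have "real (n choose 6) \<le> real (n choose k)"
      using K(2) by (simp add: binomial_mono)
    then show "(if k = 2 then 3/4 else 1) / real (n choose k) \<le> 1 / real (n choose 6)"
      using \<open>k \<in> {6..K}\<close> C6 by (simp add: frac_le)
  qed
  also have "\<dots> = real (K - 5) / real (n choose 6)"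
    by simp
  also have "\<dots> \<le> ((real n - 11) / 2) / real (n choose 6)"
    using K(3) C6 by (intro divide_right_mono) auto
  finally have tail: "(\<Sum>k = 6..K. (if k = 2 then 3/4 else 1) / real (n choose k))
      \<le> ((real n - 11) / 2) / real (n choose 6)" .
  have "{1..K} = {1, 2, 3, 4, 5} \<union> {6..K}"
    using K(1) by auto
  then have "(\<Sum>k = 1..K. (if k = 2 then 3/4 else 1) / real (n choose k))
      = 1 / real n + (3/4) / real (n choose 2) + 1 / real (n choose 3) + 1 / real (n choose 4)
        + 1 / real (n choose 5) + (\<Sum>k = 6..K. (if k = 2 then 3/4 else 1) / real (n choose k))"
    by (simp add: sum.union_disjoint)
  also have "\<dots> \<le> 1 / real n + (3/4) / real (n choose 2) + 1 / real (n choose 3)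
      + 1 / real (n choose 4) + 1 / real (n choose 5) + ((real n - 11) / 2) / real (n choose 6)"
    using tail by simp
  also have "\<dots> < 1 / real n + 2.7 / (real n)^2"
    using rational_bound_ge_14[of "real n"] n by (simp add: of_nat_binomial_2_to_6)
  finally show ?thesis
    by (simp add: K_def)
qed


section \<open>Permutation groups containing the alternating group\<close>

definition set_stabiliser :: "(nat \<Rightarrow> nat) monoid \<Rightarrow> nat set \<Rightarrow> (nat \<Rightarrow> nat) set" where
  "set_stabiliser X A = {p \<in> carrier X. p ` A = A}"

text \<open>A necessary condition for \<open>A\<close> to be an orbit of \<open>\<langle>x, y\<rangle>\<close>.\<close>

definition orbit_pairs ::
    "(nat \<Rightarrow> nat) monoid \<Rightarrow> nat set \<Rightarrow> ((nat \<Rightarrow> nat) \<times> (nat \<Rightarrow> nat)) set" where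
  "orbit_pairs X A = {(x, y). x \<in> set_stabiliser X A \<and> y \<in> set_stabiliser X A \<and>
     (2 \<le> card A \<longrightarrow> (\<exists>a\<in>A. x a \<noteq> a \<or> y a \<noteq> a))}"

definition k_subsets :: "nat \<Rightarrow> nat \<Rightarrow> nat set set" where
  "k_subsets n k = {A. A \<subseteq> {1..n} \<and> card A = k}"

lemma card_k_subsets: "card (k_subsets n k) = n choose k"
  using n_subsets[of "{1..n}" k] by (simp add: k_subsets_def)

lemma finite_k_subsets: "finite (k_subsets n k)"
  by (rule finite_subset[of _ "Pow {1..n}"]) (auto simp: k_subsets_def)

text \<open>These are exactly \<open>A\<^sub>n\<close> and \<open>S\<^sub>n\<close>.\<close>

locale alt_sym_group = group X for X :: "(nat \<Rightarrow> nat) monoid" (structure) +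
  fixes n :: nat
  assumes carrier_permutes: "p \<in> carrier X \<Longrightarrow> p permutes {1..n}"
    and evenperm_in_carrier: "p permutes {1..n} \<Longrightarrow> evenperm p \<Longrightarrow> p \<in> carrier X"
    and mult_eq_comp [simp]: "p \<otimes> q = p \<circ> q"
begin

lemma one_eq_id [simp]: "\<one> = id"
proof -
  have "id \<in> carrier X"
    by (simp add: evenperm_in_carrier permutes_id)
  then show ?thesis
    by (metis l_one mult_eq_comp comp_id)
qed

lemma comp_in_carrier [simp]: "p \<in> carrier X \<Longrightarrow> q \<in> carrier X \<Longrightarrow> p \<circ> q \<in> carrier X"
  using m_closed by simp

lemma inv_apply_apply [simp]:
  assumes "p \<in> carrier X"
  shows "(inv p) (p x) = x"
  using l_inv[OF assms] by (metis comp_apply id_apply mult_eq_comp one_eq_id)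

lemma finite_carrier: "finite (carrier X)"
  by (rule finite_subset[OF _ finite_permutations[of "{1..n}"]]) (auto dest: carrier_permutes)

lemma finite_set_stabiliser: "finite (set_stabiliser X A)"
  by (simp add: set_stabiliser_def finite_carrier)

lemma finite_orbit_pairs: "finite (orbit_pairs X A)"
proof (rule finite_subset)
  show "orbit_pairs X A \<subseteq> carrier X \<times> carrier X"
    by (auto simp: orbit_pairs_def set_stabiliser_def)
qed (simp add: finite_carrier)


subsection \<open>Invariant sets of maximal intransitive subgroups\<close>

lemma orbit_invariant:
  assumes "subgroup H X" "h \<in> H"
  shows "h ` ((\<lambda>g. g i) ` H) \<subseteq> (\<lambda>g. g i) ` H"
proof
  fix z
  assume "z \<in> h ` ((\<lambda>g. g i) ` H)"
  then obtain g where g: "g \<in> H" "z = (h \<otimes> g) i"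
    by auto
  then show "z \<in> (\<lambda>g. g i) ` H"
    using subgroup.m_closed[OF assms(1) assms(2) g(1)] by blast
qed

lemma point_stabiliser_subgroup: "subgroup {p \<in> carrier X. p a = a} X"
proof (rule subgroupI)
  show "inv p \<in> {p \<in> carrier X. p a = a}" if "p \<in> {p \<in> carrier X. p a = a}" for p
    using that inv_apply_apply[of p a] by auto
qed auto

lemma invariant_set_image_eq:
  assumes "p \<in> carrier X" "T \<subseteq> {1..n}" "p ` T \<subseteq> T"
  shows "p ` T = T"
  using assms carrier_permutes permutes_image_eq_if_subset by blast

lemma subgroup_partition_stabiliser:
  assumes "T \<subseteq> {1..n}"
  shows "subgroup {p \<in> carrier X. p ` T = T \<or> p ` T = {1..n} - T} X"
    (is "subgroup ?W X")
proof (rule subgroupI)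
  have complement: "p ` ({1..n} - U) = {1..n} - p ` U" if "p \<in> carrier X" for p U
    using that carrier_permutes permutes_image_Diff by blast
  have double_complement: "{1..n} - ({1..n} - T) = T"
    using assms by blast
  show "?W \<subseteq> carrier X" "?W \<noteq> {}"
    by auto
  show "inv p \<in> ?W" if "p \<in> ?W" for p
  proof -
    have p: "p \<in> carrier X" "p ` T = T \<or> p ` T = {1..n} - T"
      using that by auto
    have "(inv p) ` (p ` T) = T"
      using p(1) by (simp add: image_comp)
    then have "(inv p) ` T = T \<or> (inv p) ` ({1..n} - T) = T"
      using p(2) by auto
    moreover have "(inv p) ` T = {1..n} - (inv p) ` ({1..n} - T)"
      using complement[of "inv p" "{1..n} - T"] p(1) double_complement by simp
    ultimately show ?thesis
      using p(1) by auto
  qed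
  show "p \<otimes> q \<in> ?W" if "p \<in> ?W" "q \<in> ?W" for p q
  proof -
    have p: "p \<in> carrier X" "p ` T = T \<or> p ` T = {1..n} - T"
      and q: "q ` T = T \<or> q ` T = {1..n} - T"
      using that by simp_all
    have "(p \<otimes> q) ` T = p ` (q ` T)"
      by (simp add: image_comp)
    moreover have "p ` (q ` T) = p ` T \<or> p ` (q ` T) = {1..n} - p ` T"
      using q complement[OF p(1), of T] by metis
    ultimately have "(p \<otimes> q) ` T = T \<or> (p \<otimes> q) ` T = {1..n} - T"
      using p(2) double_complement by metis
    moreover have "p \<otimes> q \<in> carrier X"
      using that by (intro m_closed) auto
    ultimately show ?thesis
      by blast
  qed
qed

text \<open>The stabiliser \<open>W\<close> of the partition into \<open>T\<close> and its complement contains \<open>M\<close>, an even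
  permutation \<open>s \<notin> M\<close> swapping the two halves, but not an even permutation \<open>r\<close> moving a single
  point of \<open>T\<close> across.\<close>

lemma not_maximal_if_invariant_half:
  assumes M: "subgroup M X" "\<forall>m\<in>M. m ` T \<subseteq> T"
    and T: "T \<subseteq> {1..n}" "2 * card T = n" "2 \<le> card T"
  shows "\<not> maximal_subgroup X M"
proof
  assume max: "maximal_subgroup X M"
  define C where "C = {1..n} - T"
  define W where "W = {p \<in> carrier X. p ` T = T \<or> p ` T = C}"
  have finT: "finite T"
    using T(1) finite_subset by blast
  have card_C: "card C = card T"
    using T finT by (simp add: C_def card_Diff_subset)
  obtain a1 a2 where a: "a1 \<in> T" "a2 \<in> T" "a1 \<noteq> a2"
    using T(3) by (rule obtain_two_distinct)
  obtain c where c: "c \<in> C"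
    using card_C T(3) by (metis all_not_in_conv card.empty not_numeral_le_zero)
  have subsets: "T \<subseteq> {1..n}" "C \<subseteq> {1..n}" "insert c (T - {a1}) \<subseteq> {1..n}"
    using T(1) c by (auto simp: C_def)
  have a_in: "a1 \<in> {1..n}" "a2 \<in> {1..n}"
    using a T(1) by auto
  have card_r: "card T = card (insert c (T - {a1}))"
  proof -
    have "c \<notin> T - {a1}"
      using c by (simp add: C_def)
    then have "card (insert c (T - {a1})) = Suc (card T - 1)"
      using finT a(1) by simp
    then show ?thesis
      using T(3) by simp
  qed
  obtain r where r: "r permutes {1..n}" "evenperm r" "r ` T = insert c (T - {a1})"
    by (rule exists_evenperm_image_eq[OF _ subsets(1,3) card_r a_in a(3)]) (use a in auto)
  obtain s where s: "s permutes {1..n}" "evenperm s" "s ` T = C"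
    by (rule exists_evenperm_image_eq[OF _ subsets(1,2) card_C[symmetric] a_in a(3)]) (use a in auto)
  have "W = M \<or> W = carrier X"
  proof -
    have "subgroup W X"
      using subgroup_partition_stabiliser[OF T(1)] by (simp add: W_def C_def)
    moreover have "M \<subseteq> W"
    proof
      fix m
      assume "m \<in> M"
      then have m: "m \<in> carrier X" "m ` T \<subseteq> T"
        using M by (simp_all add: subgroup.mem_carrier)
      then have "m ` T = T"
        using T(1) by (intro invariant_set_image_eq)
      then show "m \<in> W"
        using m(1) by (simp add: W_def)
    qed
    ultimately show ?thesis
      using max by (simp add: maximal_subgroup_def)
  qed
  moreover have "s \<in> W - M"
  proof -
    have "\<not> C \<subseteq> T"
      using c unfolding C_def by blast
    then have "s \<notin> M"
      using M(2) s(3) by blast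
    then show ?thesis
      using s evenperm_in_carrier by (simp add: W_def)
  qed
  moreover have "r \<in> carrier X - W"
  proof -
    have "c \<in> r ` T" "a2 \<in> r ` T"
      using r(3) a by auto
    then have "r ` T \<noteq> T" "r ` T \<noteq> C"
      using c a(2) by (auto simp: C_def)
    then show ?thesis
      using r evenperm_in_carrier by (simp add: W_def)
  qed
  ultimately show False
    by blast
qed

lemma small_invariant_set:
  assumes M: "maximal_subgroup X M" "intransitive n M" and n: "3 \<le> n"
  obtains B where "B \<subseteq> {1..n}" "B \<noteq> {}" "2 * card B < n" "\<forall>m\<in>M. m ` B \<subseteq> B"
proof -
  have sub: "subgroup M X"
    using M(1) by (simp add: maximal_subgroup_def)
  obtain i j where ij: "i \<in> {1..n}" "j \<in> {1..n}" "\<forall>h\<in>M. h i \<noteq> j"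
    using M(2) by (auto simp: intransitive_def)
  define T where "T = (\<lambda>g. g i) ` M"
  define C where "C = {1..n} - T"
  have T_sub: "T \<subseteq> {1..n}"
  proof
    fix z
    assume "z \<in> T"
    then obtain g where "g \<in> M" "z = g i"
      by (auto simp: T_def)
    then show "z \<in> {1..n}"
      using ij(1) sub carrier_permutes permutes_in_image subgroup.mem_carrier by metis
  qed
  have T_inv: "\<forall>m\<in>M. m ` T \<subseteq> T"
    using orbit_invariant[OF sub] by (simp add: T_def)
  have C_inv: "\<forall>m\<in>M. m ` C \<subseteq> C"
  proof
    fix m
    assume "m \<in> M"
    then have "m \<in> carrier X" "m ` T = T"
      using sub T_inv T_sub by (simp_all add: subgroup.mem_carrier invariant_set_image_eq)
    then show "m ` C \<subseteq> C"
      using carrier_permutes permutes_image_Diff[of m "{1..n}" T] by (simp add: C_def)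
  qed
  have "i \<in> T"
    unfolding T_def using subgroup.one_closed[OF sub] by (metis id_apply image_eqI one_eq_id)
  moreover have "j \<in> C"
    using ij unfolding C_def T_def by auto
  ultimately have nonempty: "T \<noteq> {}" "C \<noteq> {}"
    by auto
  have "card T + card C = n"
    using card_Diff_subset[OF finite_subset[OF T_sub] T_sub] card_mono[OF _ T_sub]
    by (simp add: C_def)
  moreover have "2 * card T \<noteq> n"
    using not_maximal_if_invariant_half[OF sub T_inv T_sub] M(1) n by linarith
  ultimately consider "2 * card T < n" | "2 * card C < n"
    by linarith
  then show ?thesis
    using that T_sub T_inv C_inv nonempty by cases (auto simp: C_def)
qed

lemma generated_pair_in_orbit_pairs:
  assumes M: "maximal_subgroup X M" "intransitive n M" and n: "3 \<le> n"
    and xy: "x \<in> carrier X" "y \<in> carrier X" "generate X {x, y} \<subseteq> M"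
  obtains A where "A \<subseteq> {1..n}" "A \<noteq> {}" "2 * card A < n" "(x, y) \<in> orbit_pairs X A"
proof -
  obtain B where B: "B \<subseteq> {1..n}" "B \<noteq> {}" "2 * card B < n" "\<forall>m\<in>M. m ` B \<subseteq> B"
    using small_invariant_set[OF M n] by blast
  obtain a where a: "a \<in> B"
    using B(2) by blast
  define H where "H = generate X {x, y}"
  define A where "A = (\<lambda>h. h a) ` H"
  have H: "subgroup H X" "x \<in> H" "y \<in> H"
    using xy by (auto simp: H_def intro: generate_is_subgroup generate.incl)
  have "a \<in> A"
    unfolding A_def using subgroup.one_closed[OF H(1)] by (metis id_apply image_eqI one_eq_id)
  have "A \<subseteq> B"
    using B(4) a xy(3) by (auto simp: A_def H_def)
  moreover have "finite B"
    using B(1) finite_subset by blast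
  ultimately have "A \<subseteq> {1..n}" "2 * card A < n"
    using B(1,3) card_mono[of B A] by auto
  moreover have "x ` A = A" "y ` A = A"
    using orbit_invariant[OF H(1)] H(2,3) \<open>A \<subseteq> {1..n}\<close> xy(1,2)
    by (simp_all add: A_def invariant_set_image_eq)
  moreover have "\<exists>b\<in>A. x b \<noteq> b \<or> y b \<noteq> b" if "2 \<le> card A"
  proof (rule ccontr)
    assume "\<not> ?thesis"
    then have "x a = a" "y a = a"
      using \<open>a \<in> A\<close> by auto
    then have "H \<subseteq> {g \<in> carrier X. g a = a}"
      unfolding H_def using xy(1,2) point_stabiliser_subgroup
      by (intro generate_subgroup_incl) auto
    then have "A \<subseteq> {a}"
      by (auto simp: A_def)
    then show False
      using that card_mono[of "{a}" A] by simp
  qed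
  ultimately show ?thesis
    using xy \<open>a \<in> A\<close> by (intro that[of A]) (auto simp: orbit_pairs_def set_stabiliser_def)
qed


subsection \<open>Counting stabilisers\<close>

lemma image_in_k_subsets:
  assumes "p \<in> carrier X" "A \<in> k_subsets n k"
  shows "p ` A \<in> k_subsets n k"
proof -
  have p: "p permutes {1..n}"
    using assms(1) carrier_permutes by blast
  then have "p ` A \<subseteq> {1..n}"
    using assms(2) permutes_in_image[OF p] by (auto simp: k_subsets_def)
  moreover have "card (p ` A) = card A"
    using p permutes_inj inj_on_subset card_image by (metis subset_UNIV)
  ultimately show ?thesis
    using assms(2) by (simp add: k_subsets_def)
qed

lemma k_subsets_action: "group_action X (k_subsets n k) (\<lambda>p. \<lambda>A \<in> k_subsets n k. p ` A)"
proof -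
  let ?E = "k_subsets n k"
  have bij: "bij_betw (\<lambda>A. p ` A) ?E ?E" if p: "p \<in> carrier X" for p
  proof (rule bij_betw_byWitness[where f' = "\<lambda>A. (inv p) ` A"])
    show "\<forall>A\<in>?E. (inv p) ` p ` A = A" "\<forall>A\<in>?E. p ` (inv p) ` A = A"
      using p r_inv[OF p] by (auto simp: image_comp)
    show "(\<lambda>A. p ` A) ` ?E \<subseteq> ?E" "(\<lambda>A. (inv p) ` A) ` ?E \<subseteq> ?E"
      using p image_in_k_subsets by auto
  qed
  have in_Bij: "(\<lambda>A \<in> ?E. p ` A) \<in> Bij ?E" if "p \<in> carrier X" for p
    using bij[OF that] by (simp add: Bij_def)
  have "(\<lambda>p. \<lambda>A \<in> ?E. p ` A) \<in> hom X (BijGroup ?E)"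
  proof (rule homI)
    show "(\<lambda>A \<in> ?E. p ` A) \<in> carrier (BijGroup ?E)" if "p \<in> carrier X" for p
      using in_Bij[OF that] by (simp add: BijGroup_def)
    show "(\<lambda>A \<in> ?E. (p \<otimes> q) ` A) = (\<lambda>A \<in> ?E. p ` A) \<otimes>\<^bsub>BijGroup ?E\<^esub> (\<lambda>A \<in> ?E. q ` A)"
      if "p \<in> carrier X" "q \<in> carrier X" for p q
      using in_Bij[OF that(1)] in_Bij[OF that(2)] image_in_k_subsets[OF that(2)]
      by (auto simp: BijGroup_def compose_def image_comp intro!: restrict_ext)
  qed
  then show ?thesis
    unfolding group_action_def group_hom_def group_hom_axioms_def
    using is_group group_BijGroup by blast
qed

text \<open>Orbit-stabiliser for the action on \<open>k\<close>-subsets, which is transitive even for \<open>A\<^sub>n\<close>: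
  two points outside \<open>A\<close> make room to correct the parity.\<close>

lemma card_set_stabiliser:
  assumes A: "A \<subseteq> {1..n}" "card A + 2 \<le> n"
  shows "(n choose card A) * card (set_stabiliser X A) = order X"
proof -
  let ?E = "k_subsets n (card A)" and ?\<phi> = "\<lambda>p. \<lambda>B \<in> k_subsets n (card A). p ` B"
  interpret group_action X ?E ?\<phi>
    by (rule k_subsets_action)
  have A_in: "A \<in> ?E"
    using A by (simp add: k_subsets_def)
  have "2 \<le> card ({1..n} - A)"
    using A by (simp add: card_Diff_subset finite_subset)
  then obtain c d where cd: "c \<in> {1..n} - A" "d \<in> {1..n} - A" "c \<noteq> d"
    by (rule obtain_two_distinct)
  have "orbit X ?\<phi> A = ?E"
  proof
    show "orbit X ?\<phi> A \<subseteq> ?E"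
      using A_in image_in_k_subsets by (auto simp: orbit_def)
    show "?E \<subseteq> orbit X ?\<phi> A"
    proof
      fix B
      assume B: "B \<in> ?E"
      obtain p where "p permutes {1..n}" "evenperm p" "p ` A = B"
        by (rule exists_evenperm_image_eq[of "{1..n}" A B c d])
          (use A B cd in \<open>auto simp: k_subsets_def\<close>)
      then show "B \<in> orbit X ?\<phi> A"
        using A_in evenperm_in_carrier by (auto simp: orbit_def)
    qed
  qed
  moreover have "stabilizer X ?\<phi> A = set_stabiliser X A"
    using A_in by (auto simp: stabilizer_def set_stabiliser_def)
  ultimately show ?thesis
    using orbit_stabilizer_theorem[OF A_in] card_k_subsets by simp
qed

text \<open>Right multiplication by \<open>(a b)(c d)\<close> swaps the permutations fixing \<open>a\<close> and \<open>b\<close> with those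
  interchanging them.\<close>

lemma card_set_stabiliser_pair:
  assumes A: "A = {a, b}" "a \<noteq> b" "A \<subseteq> {1..n}" "4 \<le> n"
  shows "card (set_stabiliser X A) = 2 * card {p \<in> set_stabiliser X A. p a = a \<and> p b = b}"
    (is "card ?S = 2 * card ?F")
proof -
  have "2 \<le> card ({1..n} - A)"
    using A by (simp add: card_Diff_subset finite_subset)
  then obtain c d where cd: "c \<in> {1..n} - A" "d \<in> {1..n} - A" "c \<noteq> d"
    by (rule obtain_two_distinct)
  define \<sigma> where "\<sigma> = transpose a b \<circ> transpose c d"
  have \<sigma>: "\<sigma> \<in> carrier X" "\<sigma> a = b" "\<sigma> b = a" "\<sigma> \<circ> \<sigma> = id"
  proof -
    have "\<sigma> permutes {1..n}"
      using A cd by (auto simp: \<sigma>_def intro!: permutes_compose permutes_swap_id)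
    moreover have "evenperm \<sigma>"
      using A(2) cd(3) by (simp add: \<sigma>_def evenperm_comp permutation_swap_id evenperm_swap)
    ultimately show "\<sigma> \<in> carrier X"
      by (rule evenperm_in_carrier)
    show "\<sigma> a = b" "\<sigma> b = a" "\<sigma> \<circ> \<sigma> = id"
      using A cd by (auto simp: \<sigma>_def transpose_def fun_eq_iff)
  qed
  have "\<sigma> ` A = A"
    using \<sigma>(2,3) A(1) by auto
  then have to_S: "p \<circ> \<sigma> \<in> ?S" if "p \<in> ?S" for p
    using that \<sigma>(1) unfolding set_stabiliser_def
    by (metis (mono_tags) comp_in_carrier image_comp mem_Collect_eq)
  show ?thesis
  proof (rule card_eq_twice_if_involution[where g = "\<lambda>p. p \<circ> \<sigma>"])
    show "finite ?S"
      by (simp add: finite_set_stabiliser)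
    show "?F \<subseteq> ?S" "(p \<circ> \<sigma>) \<circ> \<sigma> = p" for p
      using \<sigma>(4) by (auto simp: comp_assoc)
    show "p \<circ> \<sigma> \<in> ?S - ?F" if "p \<in> ?F" for p
      using that to_S \<sigma>(2) A(2) by auto
    show "p \<circ> \<sigma> \<in> ?F" if "p \<in> ?S - ?F" for p
    proof -
      have "p \<in> carrier X" "p ` A = A" "\<not> (p a = a \<and> p b = b)"
        using that by (auto simp: set_stabiliser_def)
      moreover have "inj p"
        using \<open>p \<in> carrier X\<close> carrier_permutes permutes_inj by blast
      ultimately have "p a = b" "p b = a"
        using A(1,2) by (auto dest: injD)
      then show ?thesis
        using that to_S \<sigma>(2,3) by auto
    qed
  qed
qed

lemma card_orbit_pairs_le:
  assumes A: "A \<subseteq> {1..n}" "card A + 2 \<le> n"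
  shows "real (card (orbit_pairs X A))
    \<le> (if card A = 2 then 3/4 else 1) * real (card (set_stabiliser X A))^2"
proof -
  let ?S = "set_stabiliser X A"
  show ?thesis
  proof (cases "card A = 2")
    case True
    then obtain a b where ab: "A = {a, b}" "a \<noteq> b"
      by (auto simp: card_2_iff)
    let ?F = "{p \<in> ?S. p a = a \<and> p b = b}"
    have "orbit_pairs X A = ?S \<times> ?S - ?F \<times> ?F"
      using True ab by (auto simp: orbit_pairs_def)
    moreover have "?F \<times> ?F \<subseteq> ?S \<times> ?S"
      by blast
    moreover have "card ?S = 2 * card ?F"
      using card_set_stabiliser_pair[OF ab] A True by simp
    ultimately have "card (orbit_pairs X A) = 3 * card ?F ^ 2"
      using finite_set_stabiliser
      by (simp add: card_Diff_subset card_cartesian_product finite_subset power2_eq_square)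
    then show ?thesis
      using True \<open>card ?S = 2 * card ?F\<close> by simp
  next
    case False
    have "orbit_pairs X A \<subseteq> ?S \<times> ?S"
      by (auto simp: orbit_pairs_def)
    then have "card (orbit_pairs X A) \<le> card ?S ^ 2"
      using finite_set_stabiliser card_mono[of "?S \<times> ?S"]
      by (simp add: card_cartesian_product power2_eq_square)
    then show ?thesis
      using False by (simp flip: of_nat_power)
  qed
qed

lemma sum_card_orbit_pairs_le:
  assumes "k + 2 \<le> n"
  shows "real (\<Sum>A\<in>k_subsets n k. card (orbit_pairs X A))
    \<le> (if k = 2 then 3/4 else 1) * real (order X)^2 / real (n choose k)"
proof -
  let ?w = "if k = 2 then 3/4 else 1 :: real"
  have pos: "real (n choose k) > 0"
    using assms by simp
  have "real (card (orbit_pairs X A)) \<le> ?w * (real (order X) / real (n choose k))^2"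
    if "A \<in> k_subsets n k" for A
  proof -
    have "real (n choose k) * real (card (set_stabiliser X A)) = real (order X)"
      using card_set_stabiliser[of A] that assms by (simp add: k_subsets_def flip: of_nat_mult)
    then have "real (card (set_stabiliser X A)) = real (order X) / real (n choose k)"
      using pos by (simp add: field_simps)
    then show ?thesis
      using card_orbit_pairs_le[of A] that assms by (simp add: k_subsets_def)
  qed
  then have "real (\<Sum>A\<in>k_subsets n k. card (orbit_pairs X A))
      \<le> (\<Sum>A\<in>k_subsets n k. ?w * (real (order X) / real (n choose k))^2)"
    unfolding of_nat_sum by (rule sum_mono)
  also have "\<dots> = real (n choose k) * (?w * (real (order X) / real (n choose k))^2)"
    by (simp add: card_k_subsets)
  also have "\<dots> = ?w * real (order X)^2 / real (n choose k)"
    using pos by (simp add: power2_eq_square)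
  finally show ?thesis .
qed

lemma p_intrans_le_weighted_inverse_binomial_sum:
  assumes "3 \<le> n"
  shows "p_intrans n X \<le> (\<Sum>k = 1..(n - 1) div 2. (if k = 2 then 3/4 else 1) / real (n choose k))"
proof -
  let ?K = "{1..(n - 1) div 2}"
  let ?Bad = "{(x, y). x \<in> carrier X \<and> y \<in> carrier X \<and>
    (\<exists>M. maximal_subgroup X M \<and> intransitive n M \<and> generate X {x, y} \<subseteq> M)}"
  let ?U = "\<lambda>k. \<Union>A\<in>k_subsets n k. orbit_pairs X A"
  have "?Bad \<subseteq> (\<Union>k\<in>?K. ?U k)"
  proof
    fix p
    assume "p \<in> ?Bad"
    then obtain x y M where p: "p = (x, y)" and xy: "x \<in> carrier X" "y \<in> carrier X"
      and M: "maximal_subgroup X M" "intransitive n M" "generate X {x, y} \<subseteq> M"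
      by blast
    obtain A where A: "A \<subseteq> {1..n}" "A \<noteq> {}" "2 * card A < n" "(x, y) \<in> orbit_pairs X A"
      by (rule generated_pair_in_orbit_pairs[OF M(1,2) assms xy M(3)])
    have "card A \<noteq> 0"
      using A(1,2) finite_subset[OF A(1)] by simp
    then have "card A \<in> ?K"
      using A(3) by auto
    moreover have "A \<in> k_subsets n (card A)"
      using A(1) by (simp add: k_subsets_def)
    ultimately show "p \<in> (\<Union>k\<in>?K. ?U k)"
      using A(4) p by blast
  qed
  then have "card ?Bad \<le> card (\<Union>k\<in>?K. ?U k)"
    by (intro card_mono) (simp_all add: finite_k_subsets finite_orbit_pairs)
  also have "\<dots> \<le> (\<Sum>k\<in>?K. card (?U k))"
    by (rule card_UN_le) simp
  also have "\<dots> \<le> (\<Sum>k\<in>?K. \<Sum>A\<in>k_subsets n k. card (orbit_pairs X A))"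
    by (intro sum_mono card_UN_le finite_k_subsets)
  finally have "real (card ?Bad) \<le> (\<Sum>k\<in>?K. real (\<Sum>A\<in>k_subsets n k. card (orbit_pairs X A)))"
    by (simp flip: of_nat_sum)
  also have "\<dots> \<le> (\<Sum>k\<in>?K. (if k = 2 then 3/4 else 1) * real (order X)^2 / real (n choose k))"
    using assms by (intro sum_mono sum_card_orbit_pairs_le) auto
  also have "\<dots> = real (order X)^2 * (\<Sum>k\<in>?K. (if k = 2 then 3/4 else 1) / real (n choose k))"
    unfolding sum_distrib_left by (rule sum.cong) auto
  finally have bound: "real (card ?Bad)
      \<le> real (order X)^2 * (\<Sum>k\<in>?K. (if k = 2 then 3/4 else 1) / real (n choose k))" .
  have "real (order X)^2 > 0"
    using finite_carrier by (simp add: order_gt_0_iff_finite)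
  moreover have "p_intrans n X = real (card ?Bad) / real (order X)^2"
    by (simp add: p_intrans_def order_def)
  ultimately show ?thesis
    using bound by (simp add: pos_divide_le_eq mult.commute)
qed

end

lemma alt_sym_group_alt_group: "alt_sym_group (alt_group n) n"
  by (intro alt_sym_group.intro alt_sym_group_axioms.intro alt_group_is_group)
    (simp_all add: alt_group_carrier alt_group_mult)

lemma alt_sym_group_sym_group: "alt_sym_group (sym_group n) n"
  by (intro alt_sym_group.intro alt_sym_group_axioms.intro sym_group_is_group)
    (simp_all add: sym_group_carrier sym_group_mult)

theorem lemma2p2:
  fixes n :: nat and X :: "(nat \<Rightarrow> nat) monoid"
  assumes "n \<ge> 14"
    and "X = alt_group n \<or> X = sym_group n"
  shows "p_intrans n X < 1 / real n + 2.7 / (real n)^2"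
proof -
  interpret alt_sym_group X n
    using assms(2) alt_sym_group_alt_group alt_sym_group_sym_group by blast
  have "p_intrans n X \<le> (\<Sum>k = 1..(n - 1) div 2. (if k = 2 then 3/4 else 1) / real (n choose k))"
    using assms(1) by (intro p_intrans_le_weighted_inverse_binomial_sum) simp
  also have "\<dots> < 1 / real n + 2.7 / (real n)^2"
    using assms(1) by (rule weighted_inverse_binomial_sum_lt)
  finally show ?thesis .
qed

end
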